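(* Let $h$ be a positive integer and $L$ an $h$-modular lattice with zero. Let $x\in\mathcal{A}'$ and let $n,k$ be nonnegative integers. If $k\geq n$, then $x^{(k+1)}(a_n)=x^{(k)}(a_n)$ and $x^{(k+1)}(b_n)=x^{(k)}(b_n)$.
   Context: $K$ is the lattice consisting of $\varnothing$, $C=\{c\}$, $A_m=\{a_k:k\geq m\}$, $B_n=\{b_k:k\geq n\}$ ($m,n<\omega$), and $C\cup A_m\cup B_n$ with $|m-n|\leq1$, ordered by inclusion; $a_n,b_n,c$ denote $A_n,B_n,C$, so $\mathrm{J}(K)=\{c\}\cup\{a_n\}\cup\{b_n\}$ with $a_0>a_1>\cdots$, $b_0>b_1>\cdots$ and no other comparabilities. $\mathcal{A}$ is the set of antitone maps $x\colon\mathrm{J}(K)\to L$ with finite range. For $x\in\mathcal{A}$, $x(a_\infty)$, $x(b_\infty)$ are the eventual values of the increasing sequences $(x(a_n))$, $(x(b_n))$. The map $x^{(1)}$ is defined by $x^{(1)}(c)=x(c)\vee(x(a_\infty)\wedge x(b_\infty))$, $x^{(1)}(a_0)=x(a_0)$, $x^{(1)}(b_0)=x(b_0)$, $x^{(1)}(a_{n+1})=x(a_{n+1})\vee(x(b_n)\wedge x(c))$, $x^{(1)}(b_{n+1})=x(b_{n+1})\vee(x(a_n)\wedge x(c))$; $\mathcal{A}$ is closed under $x\mapsto x^{(1)}$, and $x^{(0)}=x$, $x^{(k+1)}=(x^{(k)})^{(1)}$. Put $\ell(x)=\langle x(a_\infty),x(b_\infty),x(c)\rangle$ and $\mathcal{A}'=\{x\in\mathcal{A}:\ell(x^{(1)})=\ell(x)\}$.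 $L$ is $h$-modular if $u^{(h+1)}=u^{(h)}$ for all $u\in L^3$, where $\langle x,y,z\rangle^{(1)}=\langle x\vee(y\wedge z),y\vee(x\wedge z),z\vee(x\wedge y)\rangle$. *)

theory Defs
  imports Main
begin

text \<open>Join-irreducibles of K: c, a_n, b_n.\<close>
datatype jk = C | A nat | B nat

fun jk_le :: "jk \<Rightarrow> jk \<Rightarrow> bool" where
  "jk_le C C = True"
| "jk_le (A m) (A n) = (n \<le> m)"
| "jk_le (B m) (B n) = (n \<le> m)"
| "jk_le _ _ = False"

definition in_A :: "(jk \<Rightarrow> 'a::bounded_lattice_bot) \<Rightarrow> bool" where
  "in_A x \<longleftrightarrow> (\<forall>p q. jk_le p q \<longrightarrow> x q \<le> x p) \<and> finite (range x)"

definition eventual :: "(nat \<Rightarrow> 'a) \<Rightarrow> 'a" where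
  "eventual f = (THE v. \<exists>N. \<forall>n\<ge>N. f n = v)"

definition x_ainf :: "(jk \<Rightarrow> 'a::bounded_lattice_bot) \<Rightarrow> 'a" where
  "x_ainf x = eventual (\<lambda>n. x (A n))"

definition x_binf :: "(jk \<Rightarrow> 'a::bounded_lattice_bot) \<Rightarrow> 'a" where
  "x_binf x = eventual (\<lambda>n. x (B n))"

fun step1 :: "(jk \<Rightarrow> 'a::bounded_lattice_bot) \<Rightarrow> jk \<Rightarrow> 'a" where
  "step1 x C = sup (x C) (inf (x_ainf x) (x_binf x))"
| "step1 x (A 0) = x (A 0)"
| "step1 x (B 0) = x (B 0)"
| "step1 x (A (Suc n)) = sup (x (A (Suc n))) (inf (x (B n)) (x C))"
| "step1 x (B (Suc n)) = sup (x (B (Suc n))) (inf (x (A n)) (x C))"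

definition ell :: "(jk \<Rightarrow> 'a::bounded_lattice_bot) \<Rightarrow> 'a \<times> 'a \<times> 'a" where
  "ell x = (x_ainf x, x_binf x, x C)"

definition in_A' :: "(jk \<Rightarrow> 'a::bounded_lattice_bot) \<Rightarrow> bool" where
  "in_A' x \<longleftrightarrow> in_A x \<and> ell (step1 x) = ell x"

fun tstep :: "'a::lattice \<times> 'a \<times> 'a \<Rightarrow> 'a \<times> 'a \<times> 'a" where
  "tstep (x, y, z) = (sup x (inf y z), sup y (inf x z), sup z (inf x y))"

definition h_modular :: "nat \<Rightarrow> 'a::lattice itself \<Rightarrow> bool" where
  "h_modular h _ \<longleftrightarrow> (\<forall>u::'a \<times> 'a \<times> 'a. (tstep ^^ (h+1)) u = (tstep ^^ h) u)"

end

theory Submission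
  imports Defs "HOL-Library.Infinite_Set"
begin

text \<open>
  Write \<open>\<ell>(x) = (\<alpha>, \<beta>, \<gamma>)\<close>. The condition \<open>\<ell>(x\<^sup>1) = \<ell>(x)\<close> amounts to
  \<open>\<beta> \<sqinter> \<gamma> \<le> \<alpha>\<close>, \<open>\<alpha> \<sqinter> \<gamma> \<le> \<beta>\<close> and \<open>\<alpha> \<sqinter> \<beta> \<le> \<gamma>\<close>, and under these inequalities a step
  changes neither the eventual values nor the value at \<open>c\<close>; so every iterate
  \<open>x\<^sup>k\<close> takes the value \<open>\<gamma>\<close> at \<open>c\<close>. The iterates increase pointwise. If \<open>x\<^sup>k(b\<^sub>n)\<close>
  is constant for \<open>k \<ge> n\<close>, then for \<open>k \<ge> n + 1\<close> the term \<open>x\<^sup>k(b\<^sub>n) \<sqinter> \<gamma>\<close> added at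
  \<open>a\<^sub>n\<^sub>+\<^sub>1\<close> is already below \<open>x\<^sup>n\<^sup>+\<^sup>1(a\<^sub>n\<^sub>+\<^sub>1) \<le> x\<^sup>k(a\<^sub>n\<^sub>+\<^sub>1)\<close>; induction on \<open>n\<close> does the
  rest.
\<close>

lemma eventual_eqI:
  assumes "\<forall>n\<ge>N. f n = v"
  shows "eventual f = v"
  unfolding eventual_def
proof (rule the_equality)
  show "\<exists>N. \<forall>n\<ge>N. f n = v" using assms by blast
next
  fix w assume "\<exists>M. \<forall>n\<ge>M. f n = w"
  then obtain M where "\<forall>n\<ge>M. f n = w" by blast
  with assms show "w = v" by (metis max.cobounded1 max.cobounded2)
qed

lemma mono_finite_range_eventually_constant:
  fixes f :: "nat \<Rightarrow> 'a::order"
  assumes "mono f" and "finite (range f)"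
  shows "\<exists>N. \<forall>n\<ge>N. f n = f N"
proof -
  obtain v where infinite: "infinite {n. f n = v}"
    using inf_img_fin_dom[OF assms(2)] by (auto simp: vimage_def)
  then obtain N where "f N = v"
    by (metis (mono_tags, lifting) finite.emptyI mem_Collect_eq not_finite_existsD)
  have "f n = f N" if "n \<ge> N" for n
  proof (rule antisym)
    from infinite obtain m where "m \<ge> n" "f m = v"
      using infinite_nat_iff_unbounded_le by auto
    with \<open>f N = v\<close> show "f n \<le> f N" using assms(1) by (metis monoD)
    show "f N \<le> f n" using assms(1) that by (rule monoD)
  qed
  then show ?thesis by blast
qed

lemma funpow_inflationary_mono:
  fixes f :: "'a::preorder \<Rightarrow> 'a"
  assumes "\<And>y. y \<le> f y" and "m \<le> n"
  shows "(f ^^ m) y \<le> (f ^^ n) y"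
  using assms(2)
proof (induction n rule: dec_induct)
  case (step n)
  have "(f ^^ n) y \<le> (f ^^ Suc n) y" using assms(1) by simp
  with step.IH show ?case by (rule order_trans)
qed simp

lemma step1_inflationary: "y \<le> step1 y"
proof (rule le_funI)
  fix p show "y p \<le> step1 y p"
    by (induction y p rule: step1.induct) auto
qed

definition has_tails :: "(jk \<Rightarrow> 'a::bounded_lattice_bot) \<Rightarrow> 'a \<Rightarrow> 'a \<Rightarrow> bool" where
  "has_tails y \<alpha> \<beta> \<longleftrightarrow> (\<exists>N. \<forall>n\<ge>N. y (A n) = \<alpha> \<and> y (B n) = \<beta>)"

lemma has_tails_eventual:
  assumes "has_tails y \<alpha> \<beta>"
  shows "x_ainf y = \<alpha>" and "x_binf y = \<beta>"
proof -
  from assms obtain N where "\<forall>n\<ge>N. y (A n) = \<alpha> \<and> y (B n) = \<beta>"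
    by (auto simp: has_tails_def)
  then show "x_ainf y = \<alpha>" and "x_binf y = \<beta>"
    unfolding x_ainf_def x_binf_def by (auto intro: eventual_eqI)
qed

lemma in_A_has_tails:
  assumes "in_A y"
  shows "has_tails y (x_ainf y) (x_binf y)"
proof -
  have mono: "mono (\<lambda>n. y (A n))" "mono (\<lambda>n. y (B n))"
    using assms by (auto intro: monoI simp: in_A_def)
  have fin: "finite (range (\<lambda>n. y (A n)))" "finite (range (\<lambda>n. y (B n)))"
    using assms by (auto intro: finite_subset[of _ "range y"] simp: in_A_def)
  obtain NA NB where
    "\<forall>n\<ge>NA. y (A n) = y (A NA)" and "\<forall>n\<ge>NB. y (B n) = y (B NB)"
    using mono_finite_range_eventually_constant[OF mono(1) fin(1)]
      mono_finite_range_eventually_constant[OF mono(2) fin(2)] by blast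
  then have "has_tails y (y (A NA)) (y (B NB))"
    unfolding has_tails_def by (metis max.boundedE)
  with has_tails_eventual[OF this] show ?thesis by simp
qed

lemma has_tails_step1:
  assumes "has_tails y \<alpha> \<beta>"
  shows "has_tails (step1 y) (sup \<alpha> (inf \<beta> (y C))) (sup \<beta> (inf \<alpha> (y C)))"
proof -
  from assms obtain N where N: "\<forall>n\<ge>N. y (A n) = \<alpha> \<and> y (B n) = \<beta>"
    by (auto simp: has_tails_def)
  have "step1 y (A n) = sup \<alpha> (inf \<beta> (y C)) \<and> step1 y (B n) = sup \<beta> (inf \<alpha> (y C))"
    if "n \<ge> Suc N" for n
    using that N by (cases n) auto
  then show ?thesis unfolding has_tails_def by blast
qed

lemma step1_C_has_tails:
  assumes "has_tails y \<alpha> \<beta>"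
  shows "step1 y C = sup (y C) (inf \<alpha> \<beta>)"
  using has_tails_eventual[OF assms] by simp

lemma in_A'_funpow_step1_C:
  assumes "in_A' x"
  shows "(step1 ^^ k) x C = x C"
proof -
  define \<alpha> \<beta> \<gamma> where "\<alpha> = x_ainf x" and "\<beta> = x_binf x" and "\<gamma> = x C"
  have tails: "has_tails x \<alpha> \<beta>"
    using assms in_A_has_tails unfolding in_A'_def \<alpha>_def \<beta>_def by blast
  have ell: "x_ainf (step1 x) = \<alpha>" "x_binf (step1 x) = \<beta>" "step1 x C = \<gamma>"
    using assms by (auto simp: in_A'_def ell_def \<alpha>_def \<beta>_def \<gamma>_def)
  have "sup \<alpha> (inf \<beta> \<gamma>) = \<alpha>" "sup \<beta> (inf \<alpha> \<gamma>) = \<beta>" "sup \<gamma> (inf \<alpha> \<beta>) = \<gamma>"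
    using ell has_tails_eventual[OF has_tails_step1[OF tails]] step1_C_has_tails[OF tails]
    by (simp_all add: \<gamma>_def)
  then have "has_tails ((step1 ^^ k) x) \<alpha> \<beta> \<and> (step1 ^^ k) x C = \<gamma>"
    using tails by (induction k) (auto dest: has_tails_step1 step1_C_has_tails simp: \<gamma>_def)
  then show ?thesis by (simp add: \<gamma>_def)
qed

lemma funpow_step1_stable_from_diagonal:
  assumes C_fixed: "\<And>k. (step1 ^^ k) x C = x C" and "n \<le> k"
  shows "(step1 ^^ Suc k) x (A n) = (step1 ^^ k) x (A n)
       \<and> (step1 ^^ Suc k) x (B n) = (step1 ^^ k) x (B n)"
  using assms(2)
proof (induction n arbitrary: k)
  case 0
  then show ?case by simp
next
  case (Suc m)
  let ?y = "\<lambda>k. (step1 ^^ k) x"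
  have y_mono: "?y i p \<le> ?y j p" if "i \<le> j" for i j p
    using le_funD[OF funpow_inflationary_mono[OF step1_inflationary that]] .
  have stable: "?y j (A m) = ?y m (A m) \<and> ?y j (B m) = ?y m (B m)" if "m \<le> j" for j
    using that by (induction j rule: dec_induct) (use Suc.IH in auto)
  have "inf (?y m (B m)) (x C) \<le> ?y (Suc m) (A (Suc m))"
       "inf (?y m (A m)) (x C) \<le> ?y (Suc m) (B (Suc m))"
    using C_fixed[of m] by simp_all
  then have "inf (?y m (B m)) (x C) \<le> ?y k (A (Suc m))"
            "inf (?y m (A m)) (x C) \<le> ?y k (B (Suc m))"
    using y_mono[OF Suc.prems] by (blast intro: order_trans)+
  then show ?case
    using stable[of k] C_fixed[of k] Suc.prems by (simp add: sup_absorb1)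
qed

theorem lemma5p5:
  fixes h :: nat and x :: "jk \<Rightarrow> 'a::bounded_lattice_bot" and n k :: nat
  assumes "h > 0"
    and "h_modular h TYPE('a)"
    and "in_A' x"
    and "k \<ge> n"
  shows "(step1 ^^ (k+1)) x (A n) = (step1 ^^ k) x (A n)
       \<and> (step1 ^^ (k+1)) x (B n) = (step1 ^^ k) x (B n)"
  using funpow_step1_stable_from_diagonal[OF in_A'_funpow_step1_C[OF assms(3)] assms(4)]
  by simp

end
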